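(* Consider a finite tabular MDP with a unique optimal policy $\pi^*$ and $d_\rho^\pi(s)\ge d_{\min}>0$ for all states $s$ and all full-support policies $\pi$. For any $\eta\in(0,\infty)$, let $\pi_t$ be generated by the discrete DG update $\pi_{t+1}(a|s)=\pi_t(a|s)e^{\alpha w_t(s,a)U_t(s,a)}/Z^t_s$ with sufficiently small step size $\alpha>0$ (as required for $\pi_t\to\pi^*$). Then $\delta_t:=V^*-V(\pi_t)=O(1/t)$.
   Context: A finite MDP $(\mathcal S,\mathcal A,P,r,\gamma,\rho)$ with $r(s,a)\in[0,1]$, $\gamma\in[0,1)$; tabular softmax policies. $V^\pi,Q^\pi$ discounted value functions, $V(\pi)=\mathbb{E}_{s\sim\rho}V^\pi(s)$, $V^*=V(\pi^* )$, $d_\rho^\pi(s)=(1-\gamma)\sum_{t\ge0}\gamma^t\Pr(s_t=s\mid\rho,\pi)$. $U_t(s,a):=Q^{\pi_t}(s,a)-V^{\pi_t}(s)$, $\ell_t(s,a):=-\log\pi_t(a|s)$, $w_t(s,a):=\sigma(U_t(s,a)\ell_t(s,a)/\eta)$ with $\sigma(x)=1/(1+e^{-x})$, $Z^t_s:=\sum_{a'}\pi_t(a'|s)e^{\alpha w_t(s,a')U_t(s,a')}$. *)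

theory Defs
  imports Complex_Main "HOL-Library.Landau_Symbols"
begin

text \<open>A (stochastic, tabular) policy is a function pi s a = pi(a|s).\<close>

definition is_dist :: "('x::finite \<Rightarrow> real) \<Rightarrow> bool" where
  "is_dist \<mu> \<longleftrightarrow> (\<forall>x. 0 \<le> \<mu> x) \<and> (\<Sum>x\<in>UNIV. \<mu> x) = 1"

definition is_policy :: "('s::finite \<Rightarrow> 'a::finite \<Rightarrow> real) \<Rightarrow> bool" where
  "is_policy \<pi> \<longleftrightarrow> (\<forall>s. is_dist (\<pi> s))"

definition full_support :: "('s::finite \<Rightarrow> 'a::finite \<Rightarrow> real) \<Rightarrow> bool" where
  "full_support \<pi> \<longleftrightarrow> is_policy \<pi> \<and> (\<forall>s a. 0 < \<pi> s a)"

definition is_mdp :: "('s::finite \<Rightarrow> 'a::finite \<Rightarrow> 's \<Rightarrow> real) \<Rightarrow> ('s \<Rightarrow> 'a \<Rightarrow> real)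
    \<Rightarrow> real \<Rightarrow> ('s \<Rightarrow> real) \<Rightarrow> bool" where
  "is_mdp P r \<gamma> \<rho> \<longleftrightarrow> (\<forall>s a. is_dist (P s a)) \<and> (\<forall>s a. 0 \<le> r s a \<and> r s a \<le> 1)
     \<and> 0 \<le> \<gamma> \<and> \<gamma> < 1 \<and> is_dist \<rho>"

fun state_dist :: "('s::finite \<Rightarrow> 'a::finite \<Rightarrow> 's \<Rightarrow> real) \<Rightarrow> ('s \<Rightarrow> 'a \<Rightarrow> real)
    \<Rightarrow> ('s \<Rightarrow> real) \<Rightarrow> nat \<Rightarrow> 's \<Rightarrow> real" where
  "state_dist P \<pi> \<mu> 0 = \<mu>"
| "state_dist P \<pi> \<mu> (Suc t) =
     (\<lambda>s'. \<Sum>s\<in>UNIV. state_dist P \<pi> \<mu> t s * (\<Sum>a\<in>UNIV. \<pi> s a * P s a s'))"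

definition Vf :: "('s::finite \<Rightarrow> 'a::finite \<Rightarrow> 's \<Rightarrow> real) \<Rightarrow> ('s \<Rightarrow> 'a \<Rightarrow> real) \<Rightarrow> real
    \<Rightarrow> ('s \<Rightarrow> 'a \<Rightarrow> real) \<Rightarrow> 's \<Rightarrow> real" where
  "Vf P r \<gamma> \<pi> s = (\<Sum>t. \<gamma> ^ t * (\<Sum>s'\<in>UNIV. state_dist P \<pi> (\<lambda>x. if x = s then 1 else 0) t s'
                                   * (\<Sum>a\<in>UNIV. \<pi> s' a * r s' a)))"

definition Qf :: "('s::finite \<Rightarrow> 'a::finite \<Rightarrow> 's \<Rightarrow> real) \<Rightarrow> ('s \<Rightarrow> 'a \<Rightarrow> real) \<Rightarrow> real
    \<Rightarrow> ('s \<Rightarrow> 'a \<Rightarrow> real) \<Rightarrow> 's \<Rightarrow> 'a \<Rightarrow> real" where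
  "Qf P r \<gamma> \<pi> s a = r s a + \<gamma> * (\<Sum>s'\<in>UNIV. P s a s' * Vf P r \<gamma> \<pi> s')"

definition Vrho :: "('s::finite \<Rightarrow> 'a::finite \<Rightarrow> 's \<Rightarrow> real) \<Rightarrow> ('s \<Rightarrow> 'a \<Rightarrow> real) \<Rightarrow> real
    \<Rightarrow> ('s \<Rightarrow> real) \<Rightarrow> ('s \<Rightarrow> 'a \<Rightarrow> real) \<Rightarrow> real" where
  "Vrho P r \<gamma> \<rho> \<pi> = (\<Sum>s\<in>UNIV. \<rho> s * Vf P r \<gamma> \<pi> s)"

definition visit :: "('s::finite \<Rightarrow> 'a::finite \<Rightarrow> 's \<Rightarrow> real) \<Rightarrow> real \<Rightarrow> ('s \<Rightarrow> real)
    \<Rightarrow> ('s \<Rightarrow> 'a \<Rightarrow> real) \<Rightarrow> 's \<Rightarrow> real" where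
  "visit P \<gamma> \<rho> \<pi> s = (1 - \<gamma>) * (\<Sum>t. \<gamma> ^ t * state_dist P \<pi> \<rho> t s)"

definition optimal_policy :: "('s::finite \<Rightarrow> 'a::finite \<Rightarrow> 's \<Rightarrow> real) \<Rightarrow> ('s \<Rightarrow> 'a \<Rightarrow> real)
    \<Rightarrow> real \<Rightarrow> ('s \<Rightarrow> 'a \<Rightarrow> real) \<Rightarrow> bool" where
  "optimal_policy P r \<gamma> \<pi>s \<longleftrightarrow> is_policy \<pi>s \<and>
     (\<forall>\<pi>. is_policy \<pi> \<longrightarrow> (\<forall>s. Vf P r \<gamma> \<pi> s \<le> Vf P r \<gamma> \<pi>s s))"

definition sigmoid :: "real \<Rightarrow> real" where
  "sigmoid x = 1 / (1 + exp (- x))"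

definition Uf where
  "Uf P r \<gamma> \<pi> s a = Qf P r \<gamma> \<pi> s a - Vf P r \<gamma> \<pi> s"

definition wf :: "('s::finite \<Rightarrow> 'a::finite \<Rightarrow> 's \<Rightarrow> real) \<Rightarrow> ('s \<Rightarrow> 'a \<Rightarrow> real) \<Rightarrow> real
    \<Rightarrow> real \<Rightarrow> ('s \<Rightarrow> 'a \<Rightarrow> real) \<Rightarrow> 's \<Rightarrow> 'a \<Rightarrow> real" where
  "wf P r \<gamma> \<eta> \<pi> s a = sigmoid (Uf P r \<gamma> \<pi> s a * (- ln (\<pi> s a)) / \<eta>)"

definition dg_step :: "('s::finite \<Rightarrow> 'a::finite \<Rightarrow> 's \<Rightarrow> real) \<Rightarrow> ('s \<Rightarrow> 'a \<Rightarrow> real) \<Rightarrow> real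
    \<Rightarrow> real \<Rightarrow> real \<Rightarrow> ('s \<Rightarrow> 'a \<Rightarrow> real) \<Rightarrow> ('s \<Rightarrow> 'a \<Rightarrow> real)" where
  "dg_step P r \<gamma> \<eta> \<alpha> \<pi> = (\<lambda>s a.
     \<pi> s a * exp (\<alpha> * wf P r \<gamma> \<eta> \<pi> s a * Uf P r \<gamma> \<pi> s a)
     / (\<Sum>a'\<in>UNIV. \<pi> s a' * exp (\<alpha> * wf P r \<gamma> \<eta> \<pi> s a' * Uf P r \<gamma> \<pi> s a')))"

definition dg_iter where
  "dg_iter P r \<gamma> \<eta> \<alpha> \<pi>0 t = (dg_step P r \<gamma> \<eta> \<alpha> ^^ t) \<pi>0"

end

theory Submission
  imports Defs
begin

text \<open>The DG update multiplies \<open>\<pi>\<^sub>t(a|s)\<close> by \<open>exp(\<alpha> w\<^sub>t U\<^sub>t)\<close> with a weight \<open>0 < w\<^sub>t < 1\<close>, so the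
  expected advantage of \<open>\<pi>\<^sub>t\<^sub>+\<^sub>1\<close> under \<open>\<pi>\<^sub>t\<close> is nonnegative and, by the performance difference
  lemma, the values \<open>V\<^sup>\<pi>\<^sup>t\<close> increase to a limit. An action with positive limiting advantage would
  eventually drain the probability of every action at its state, so the limit has no positive
  advantage and equals \<open>V\<^sup>*\<close>. Uniqueness of \<open>\<pi>\<^sup>*\<close> makes the action gap strict: eventually every
  non-greedy advantage is negative, and the greedy probabilities stay above some \<open>p > 0\<close>. From then
  on the largest greedy advantage \<open>u\<^sub>t \<ge> (1 - \<gamma>) \<delta>\<^sub>t\<close> gets weight \<open>w\<^sub>t \<ge> 1/2\<close>, and the performance
  difference lemma with \<open>d\<^sub>\<rho> \<ge> d\<^sub>m\<^sub>i\<^sub>n\<close> yields \<open>\<delta>\<^sub>t - \<delta>\<^sub>t\<^sub>+\<^sub>1 \<ge> c \<delta>\<^sub>t\<^sup>2\<close>; such sequences are \<open>O(1/t)\<close>.\<close>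

section \<open>Sequences with quadratic decrease\<close>

lemma quadratic_decrease_le_reciprocal:
  fixes z :: "nat \<Rightarrow> real"
  assumes nonneg: "\<And>n. 0 \<le> z n" and decr: "\<And>n. z (Suc n) \<le> z n - (z n)\<^sup>2"
  shows "z n \<le> 1 / (real n + 1)"
proof (induction n)
  case 0
  have "z 0 * z 0 \<le> z 0 * 1"
    using nonneg[of 1] decr[of 0] by (simp add: power2_eq_square)
  then show ?case
    using nonneg[of 0] by (cases "z 0 = 0") auto
next
  case (Suc n)
  have "z n - (z n)\<^sup>2 \<le> 1 / (real n + 2)"
  proof (cases "n = 0")
    case True
    have "0 \<le> (z 0 - 1/2)\<^sup>2" by simp
    then show ?thesis using True by (simp add: power2_eq_square algebra_simps)
  next
    case False
    define c where "c = 1 / (real n + 1)"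
    have "2 * c \<le> 1" and "z n \<le> c"
      using False Suc.IH by (auto simp: c_def field_simps)
    \<comment> \<open>\<open>x \<mapsto> x - x\<^sup>2\<close> is increasing on \<open>[0, 1/2]\<close>\<close>
    then have "0 \<le> (c - z n) * (1 - c - z n)" by (intro mult_nonneg_nonneg) auto
    then have "z n - (z n)\<^sup>2 \<le> c - c\<^sup>2" by (simp add: power2_eq_square algebra_simps)
    also have "c - c\<^sup>2 = real n / (real n + 1)\<^sup>2"
      by (simp add: c_def power2_eq_square diff_divide_distrib divide_simps)
    also have "\<dots> \<le> 1 / (real n + 2)"
      by (simp add: divide_simps power2_eq_square algebra_simps add_pos_nonneg)
    finally show ?thesis .
  qed
  then show ?case using decr[of n] by (simp add: add.commute)
qed

lemma quadratic_decrease_bigo: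
  fixes x :: "nat \<Rightarrow> real"
  assumes \<kappa>: "\<kappa> > 0"
    and nonneg: "\<And>t. t \<ge> T \<Longrightarrow> 0 \<le> x t"
    and decr: "\<And>t. t \<ge> T \<Longrightarrow> x (Suc t) \<le> x t - \<kappa> * (x t)\<^sup>2"
  shows "x \<in> O(\<lambda>t. 1 / real t)"
proof -
  have shifted: "\<kappa> * x (T + n) \<le> 1 / (real n + 1)" for n
  proof (rule quadratic_decrease_le_reciprocal[where z = "\<lambda>n. \<kappa> * x (T + n)"])
    show "0 \<le> \<kappa> * x (T + n)" for n using nonneg[of "T + n"] \<kappa> by simp
    show "\<kappa> * x (T + Suc n) \<le> \<kappa> * x (T + n) - (\<kappa> * x (T + n))\<^sup>2" for n
      using mult_left_mono[OF decr[of "T + n"], of \<kappa>] \<kappa>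
      by (simp add: power2_eq_square algebra_simps)
  qed
  show ?thesis
  proof (rule bigoI[where c = "(real T + 1) / \<kappa>"])
    show "eventually (\<lambda>t. norm (x t) \<le> (real T + 1) / \<kappa> * norm (1 / real t)) at_top"
      unfolding eventually_at_top_linorder
    proof (intro exI[of _ "Suc T"] allI impI)
      fix t assume t: "Suc T \<le> t"
      define n where "n = t - T"
      have t_eq: "t = T + n" using t by (simp add: n_def)
      have "x t \<le> 1 / (\<kappa> * (real n + 1))"
        using shifted[of n] \<kappa> by (simp add: t_eq pos_le_divide_eq mult_ac)
      also have "\<dots> = (1 / \<kappa>) * (1 / (real n + 1))" by simp
      also have "\<dots> \<le> (1 / \<kappa>) * ((real T + 1) / real t)"
      proof (rule mult_left_mono)
        have "real t \<le> (real T + 1) * (real n + 1)" by (simp add: t_eq algebra_simps)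
        then show "1 / (real n + 1) \<le> (real T + 1) / real t" using t by (simp add: divide_simps)
      qed (use \<kappa> in simp)
      also have "\<dots> = (real T + 1) / \<kappa> * (1 / real t)" by simp
      finally show "norm (x t) \<le> (real T + 1) / \<kappa> * norm (1 / real t)"
        using nonneg[of t] t by simp
    qed
  qed
qed

lemma policy_nonneg: "is_policy \<pi> \<Longrightarrow> 0 \<le> \<pi> s a"
  by (simp add: is_policy_def is_dist_def)

lemma policy_sum: "is_policy \<pi> \<Longrightarrow> (\<Sum>a\<in>UNIV. \<pi> s a) = 1"
  by (simp add: is_policy_def is_dist_def)

lemma policy_avg_const:
  assumes "is_policy \<pi>" shows "(\<Sum>a\<in>UNIV. \<pi> s a * c) = c"
  using policy_sum[OF assms] by (simp flip: sum_distrib_right)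

definition dirac :: "'x \<Rightarrow> 'x \<Rightarrow> real" where
  "dirac s = (\<lambda>x. if x = s then 1 else 0)"

lemma is_dist_dirac: "is_dist (dirac (s::'x::finite))"
  by (simp add: is_dist_def dirac_def)

lemma sum_dirac: "(\<Sum>x\<in>UNIV. dirac (s::'x::finite) x * f x) = f s"
proof -
  have "(\<Sum>x\<in>UNIV. dirac s x * f x) = (\<Sum>x\<in>UNIV. if x = s then f x else 0)"
    by (rule sum.cong) (auto simp: dirac_def)
  then show ?thesis by simp
qed

definition deterministic :: "('s \<Rightarrow> 'a) \<Rightarrow> 's \<Rightarrow> 'a \<Rightarrow> real" where
  "deterministic f s = dirac (f s)"

lemma policy_deterministic: "is_policy (deterministic (f :: 's::finite \<Rightarrow> 'a::finite))"
  by (simp add: is_policy_def deterministic_def is_dist_dirac)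

lemma finite_ex_argmax: "\<exists>x. \<forall>y. f y \<le> (f (x :: 'x::finite) :: 'b::linorder)"
proof -
  have "Max (range f) \<in> range f" by (rule Max_in) simp_all
  then obtain x where x: "f x = Max (range f)" by (metis imageE)
  have "f y \<le> Max (range f)" for y by (rule Max_ge) simp_all
  then show ?thesis unfolding x[symmetric] by blast
qed

lemma sigmoid_pos: "0 < sigmoid x"
  by (simp add: sigmoid_def add_pos_pos)

lemma sigmoid_less_1: "sigmoid x < 1"
  by (simp add: sigmoid_def add_pos_pos)

lemma sigmoid_ge_half: "0 \<le> x \<Longrightarrow> 1/2 \<le> sigmoid x"
  by (simp add: sigmoid_def add_pos_pos divide_simps)

section \<open>Finite discounted MDPs\<close>

locale finite_mdp =
  fixes P :: "'s::finite \<Rightarrow> 'a::finite \<Rightarrow> 's \<Rightarrow> real" and r :: "'s \<Rightarrow> 'a \<Rightarrow> real" and \<gamma> :: real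
  assumes P_nonneg: "\<And>s a s'. 0 \<le> P s a s'" and P_sum: "\<And>s a. (\<Sum>s'\<in>UNIV. P s a s') = 1"
    and r_nonneg: "\<And>s a. 0 \<le> r s a" and r_le_1: "\<And>s a. r s a \<le> 1"
    and gamma_nonneg: "0 \<le> \<gamma>" and gamma_less_1: "\<gamma> < 1"

lemma finite_mdp_if_is_mdp: "is_mdp P r \<gamma> \<rho> \<Longrightarrow> finite_mdp P r \<gamma>"
  by unfold_locales (auto simp: is_mdp_def is_dist_def)

context finite_mdp
begin

definition pol_trans :: "('s \<Rightarrow> 'a \<Rightarrow> real) \<Rightarrow> 's \<Rightarrow> 's \<Rightarrow> real" where
  "pol_trans \<pi> s s' = (\<Sum>a\<in>UNIV. \<pi> s a * P s a s')"

definition pol_reward :: "('s \<Rightarrow> 'a \<Rightarrow> real) \<Rightarrow> 's \<Rightarrow> real" where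
  "pol_reward \<pi> s = (\<Sum>a\<in>UNIV. \<pi> s a * r s a)"

definition pol_expect :: "('s \<Rightarrow> 'a \<Rightarrow> real) \<Rightarrow> 's \<Rightarrow> ('s \<Rightarrow> real) \<Rightarrow> real" where
  "pol_expect \<pi> s D = (\<Sum>a\<in>UNIV. \<pi> s a * (\<Sum>s'\<in>UNIV. P s a s' * D s'))"

lemma pol_expect_pol_trans: "pol_expect \<pi> s D = (\<Sum>s'\<in>UNIV. pol_trans \<pi> s s' * D s')"
  unfolding pol_expect_def pol_trans_def
  by (simp add: sum_distrib_left sum_distrib_right mult.assoc) (rule sum.swap)

lemma pol_trans_nonneg: "is_policy \<pi> \<Longrightarrow> 0 \<le> pol_trans \<pi> s s'"
  unfolding pol_trans_def by (intro sum_nonneg mult_nonneg_nonneg policy_nonneg P_nonneg)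

lemma pol_expect_const:
  assumes "is_policy \<pi>" shows "pol_expect \<pi> s (\<lambda>_. c) = c"
  by (simp add: pol_expect_def P_sum policy_sum[OF assms] flip: sum_distrib_right)

lemma pol_trans_sum: "is_policy \<pi> \<Longrightarrow> (\<Sum>s'\<in>UNIV. pol_trans \<pi> s s') = 1"
  using pol_expect_const[of \<pi> s 1] by (simp add: pol_expect_pol_trans)

lemma pol_expect_mono: "is_policy \<pi> \<Longrightarrow> (\<And>x. D x \<le> E x) \<Longrightarrow> pol_expect \<pi> s D \<le> pol_expect \<pi> s E"
  unfolding pol_expect_def by (intro sum_mono mult_left_mono P_nonneg policy_nonneg) auto

lemma pol_expect_diff: "pol_expect \<pi> s (\<lambda>x. D x - E x) = pol_expect \<pi> s D - pol_expect \<pi> s E"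
  unfolding pol_expect_def by (simp add: algebra_simps sum_subtractf)

lemma pol_expect_deterministic:
  "pol_expect (deterministic f) s D = (\<Sum>s'\<in>UNIV. P s (f s) s' * D s')"
  by (simp add: pol_expect_def deterministic_def sum_dirac)

lemma pol_reward_nonneg: "is_policy \<pi> \<Longrightarrow> 0 \<le> pol_reward \<pi> s"
  unfolding pol_reward_def by (intro sum_nonneg mult_nonneg_nonneg policy_nonneg r_nonneg)

lemma pol_reward_le_1:
  assumes "is_policy \<pi>" shows "pol_reward \<pi> s \<le> 1"
proof -
  have "pol_reward \<pi> s \<le> (\<Sum>a\<in>UNIV. \<pi> s a * 1)"
    unfolding pol_reward_def by (intro sum_mono mult_left_mono r_le_1 policy_nonneg assms)
  then show ?thesis using policy_sum[OF assms] by simp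
qed

lemma state_dist_Suc': "state_dist P \<pi> \<mu> (Suc n) s' = (\<Sum>s\<in>UNIV. state_dist P \<pi> \<mu> n s * pol_trans \<pi> s s')"
  by (simp add: pol_trans_def)

lemma state_dist_Suc_expect:
  "(\<Sum>x\<in>UNIV. state_dist P \<pi> \<mu> (Suc n) x * D x) = (\<Sum>s\<in>UNIV. state_dist P \<pi> \<mu> n s * pol_expect \<pi> s D)"
  unfolding state_dist_Suc' pol_expect_pol_trans
  by (simp add: sum_distrib_left sum_distrib_right mult.assoc) (rule sum.swap)

lemma state_dist_nonneg: "is_policy \<pi> \<Longrightarrow> (\<And>x. 0 \<le> \<mu> x) \<Longrightarrow> 0 \<le> state_dist P \<pi> \<mu> n x"
proof (induction n arbitrary: x)
  case (Suc n)
  then show ?case unfolding state_dist_Suc' by (intro sum_nonneg mult_nonneg_nonneg pol_trans_nonneg) auto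
qed simp

lemma state_dist_sum: "is_policy \<pi> \<Longrightarrow> (\<Sum>x\<in>UNIV. state_dist P \<pi> \<mu> n x) = (\<Sum>x\<in>UNIV. \<mu> x)"
proof (induction n)
  case (Suc n)
  have "(\<Sum>x\<in>UNIV. state_dist P \<pi> \<mu> (Suc n) x) = (\<Sum>s\<in>UNIV. state_dist P \<pi> \<mu> n s * (\<Sum>x\<in>UNIV. pol_trans \<pi> s x))"
    unfolding state_dist_Suc' by (subst sum.swap) (simp add: sum_distrib_left)
  then show ?case using Suc by (simp add: pol_trans_sum)
qed simp

lemma state_dist_le_1: "is_policy \<pi> \<Longrightarrow> is_dist \<mu> \<Longrightarrow> state_dist P \<pi> \<mu> n x \<le> 1"
  using member_le_sum[of x UNIV "state_dist P \<pi> \<mu> n"] state_dist_nonneg[of \<pi> \<mu>] state_dist_sum[of \<pi> \<mu>]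
  by (simp add: is_dist_def)

lemma abs_state_dist_weighted_sum_le:
  assumes p: "is_policy \<pi>" and \<mu>: "is_dist \<mu>"
  shows "\<bar>\<Sum>x\<in>UNIV. state_dist P \<pi> \<mu> n x * f x\<bar> \<le> (\<Sum>x\<in>UNIV. \<bar>f x\<bar>)"
proof -
  have nonneg: "0 \<le> state_dist P \<pi> \<mu> n x" for x
    using \<mu> by (intro state_dist_nonneg[OF p]) (simp add: is_dist_def)
  have "\<bar>\<Sum>x\<in>UNIV. state_dist P \<pi> \<mu> n x * f x\<bar> \<le> (\<Sum>x\<in>UNIV. state_dist P \<pi> \<mu> n x * \<bar>f x\<bar>)"
    using nonneg by (auto intro!: order_trans[OF sum_abs] sum_mono simp: abs_mult)
  also have "\<dots> \<le> (\<Sum>x\<in>UNIV. \<bar>f x\<bar>)"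
    using nonneg state_dist_le_1[OF p \<mu>] by (intro sum_mono mult_left_le_one_le) auto
  finally show ?thesis .
qed

lemma state_dist_linear: "state_dist P \<pi> \<mu> n x = (\<Sum>y\<in>UNIV. \<mu> y * state_dist P \<pi> (dirac y) n x)"
proof (induction n arbitrary: x)
  case 0
  show ?case using sum_dirac[of x \<mu>] by (simp add: dirac_def mult.commute eq_commute)
next
  case (Suc n)
  show ?case unfolding state_dist_Suc' Suc
    by (simp add: sum_distrib_left sum_distrib_right mult.assoc) (rule sum.swap)
qed

lemma state_dist_Suc_start: "state_dist P \<pi> \<mu> (Suc n) = state_dist P \<pi> (state_dist P \<pi> \<mu> 1) n"
proof (induction n)
  case (Suc n)
  show ?case by (subst state_dist.simps(2)) (simp only: Suc, simp)
qed simp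

lemma state_dist_dirac_Suc:
  "state_dist P \<pi> (dirac s) (Suc n) x = (\<Sum>s'\<in>UNIV. pol_trans \<pi> s s' * state_dist P \<pi> (dirac s') n x)"
proof -
  have first_step: "state_dist P \<pi> (dirac s) 1 = pol_trans \<pi> s"
  proof
    fix x show "state_dist P \<pi> (dirac s) 1 x = pol_trans \<pi> s x"
      using sum_dirac[of s "\<lambda>y. pol_trans \<pi> y x"]
      by (simp only: One_nat_def state_dist_Suc' state_dist.simps(1))
  qed
  have "state_dist P \<pi> (dirac s) (Suc n) x = state_dist P \<pi> (pol_trans \<pi> s) n x"
    by (simp only: state_dist_Suc_start first_step)
  then show ?thesis by (simp only: state_dist_linear[of _ "pol_trans \<pi> s"])
qed

definition expected_reward :: "('s \<Rightarrow> 'a \<Rightarrow> real) \<Rightarrow> 's \<Rightarrow> nat \<Rightarrow> real" where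
  "expected_reward \<pi> s t = (\<Sum>x\<in>UNIV. state_dist P \<pi> (dirac s) t x * pol_reward \<pi> x)"

lemma Vf_eq_suminf: "Vf P r \<gamma> \<pi> s = (\<Sum>t. \<gamma>^t * expected_reward \<pi> s t)"
  unfolding Vf_def expected_reward_def dirac_def pol_reward_def ..

lemma expected_reward_nonneg: "is_policy \<pi> \<Longrightarrow> 0 \<le> expected_reward \<pi> s t"
  unfolding expected_reward_def
  by (intro sum_nonneg mult_nonneg_nonneg pol_reward_nonneg state_dist_nonneg)
     (auto simp: dirac_def)

lemma expected_reward_le_1:
  assumes "is_policy \<pi>" shows "expected_reward \<pi> s t \<le> 1"
proof -
  have "expected_reward \<pi> s t \<le> (\<Sum>x\<in>UNIV. state_dist P \<pi> (dirac s) t x * 1)"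
    unfolding expected_reward_def using assms is_dist_dirac[of s]
    by (intro sum_mono mult_left_mono pol_reward_le_1 state_dist_nonneg) (auto simp: is_dist_def)
  also have "\<dots> = 1" using state_dist_sum[OF assms] is_dist_dirac[of s] by (simp add: is_dist_def)
  finally show ?thesis .
qed

lemma summable_geometric_gamma: "summable (\<lambda>t. \<gamma>^t)"
  using gamma_nonneg gamma_less_1 by (simp add: summable_geometric)

lemma summable_discounted_bounded:
  assumes "\<And>t. 0 \<le> f t" "\<And>t. f t \<le> 1" shows "summable (\<lambda>t. \<gamma>^t * f t)"
  by (rule summable_comparison_test[OF _ summable_geometric_gamma])
     (use assms gamma_nonneg in \<open>auto intro!: mult_left_le simp: abs_mult\<close>)

lemma summable_discounted_reward: "is_policy \<pi> \<Longrightarrow> summable (\<lambda>t. \<gamma>^t * expected_reward \<pi> s t)"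
  by (intro summable_discounted_bounded expected_reward_nonneg expected_reward_le_1)

lemma expected_reward_0: "expected_reward \<pi> s 0 = pol_reward \<pi> s"
  using sum_dirac[of s "pol_reward \<pi>"] by (simp add: expected_reward_def)

lemma expected_reward_Suc:
  "expected_reward \<pi> s (Suc t) = (\<Sum>s'\<in>UNIV. pol_trans \<pi> s s' * expected_reward \<pi> s' t)"
  unfolding expected_reward_def state_dist_dirac_Suc
  by (simp add: sum_distrib_left sum_distrib_right mult.assoc) (rule sum.swap)

lemma Vf_bellman:
  assumes p: "is_policy \<pi>"
  shows "Vf P r \<gamma> \<pi> s = pol_reward \<pi> s + \<gamma> * pol_expect \<pi> s (Vf P r \<gamma> \<pi>)"
proof -
  let ?g = "\<lambda>s t. \<gamma>^t * expected_reward \<pi> s t"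
  have sm: "\<And>s. summable (?g s)" by (rule summable_discounted_reward[OF p])
  have "(\<Sum>t. ?g s (Suc t)) = (\<Sum>t. \<gamma> * (\<Sum>s'\<in>UNIV. pol_trans \<pi> s s' * ?g s' t))"
    by (simp add: expected_reward_Suc sum_distrib_left mult_ac)
  also have "\<dots> = \<gamma> * (\<Sum>t. \<Sum>s'\<in>UNIV. pol_trans \<pi> s s' * ?g s' t)"
    by (intro suminf_mult summable_sum summable_mult sm)
  also have "(\<Sum>t. \<Sum>s'\<in>UNIV. pol_trans \<pi> s s' * ?g s' t) = (\<Sum>s'\<in>UNIV. \<Sum>t. pol_trans \<pi> s s' * ?g s' t)"
    by (intro suminf_sum summable_mult sm)
  also have "\<dots> = (\<Sum>s'\<in>UNIV. pol_trans \<pi> s s' * Vf P r \<gamma> \<pi> s')"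
    unfolding Vf_eq_suminf by (intro sum.cong refl suminf_mult sm)
  finally have "(\<Sum>t. ?g s (Suc t)) = \<gamma> * pol_expect \<pi> s (Vf P r \<gamma> \<pi>)"
    by (simp add: pol_expect_pol_trans)
  moreover have "(\<Sum>t. ?g s (Suc t)) = Vf P r \<gamma> \<pi> s - pol_reward \<pi> s"
    unfolding Vf_eq_suminf suminf_split_head[OF sm] by (simp add: expected_reward_0)
  ultimately show ?thesis by simp
qed

lemma Vf_nonneg: "is_policy \<pi> \<Longrightarrow> 0 \<le> Vf P r \<gamma> \<pi> s"
  unfolding Vf_eq_suminf
  by (intro suminf_nonneg summable_discounted_reward mult_nonneg_nonneg expected_reward_nonneg
      zero_le_power gamma_nonneg)

lemma Vf_le:
  assumes "is_policy \<pi>" shows "Vf P r \<gamma> \<pi> s \<le> 1 / (1 - \<gamma>)"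
proof -
  have "Vf P r \<gamma> \<pi> s \<le> (\<Sum>t. \<gamma>^t)" unfolding Vf_eq_suminf
    using expected_reward_le_1[OF assms] gamma_nonneg
    by (intro suminf_le summable_discounted_reward[OF assms] summable_geometric_gamma)
       (auto intro: mult_left_le)
  also have "\<dots> = 1 / (1 - \<gamma>)" using gamma_nonneg gamma_less_1 by (simp add: suminf_geometric)
  finally show ?thesis .
qed

text \<open>Comparison principle: \<open>pol_expect\<close> is a monotone average, so at a maximum of \<open>D\<close> the
  discount \<open>\<gamma> < 1\<close> turns the inequality into a bound.\<close>

lemma bound_from_bellman_ineq:
  assumes p: "is_policy \<pi>"
    and ineq: "\<And>s. D s \<le> B s + \<gamma> * pol_expect \<pi> s D" and bound: "\<And>s. B s \<le> c"
  shows "D s \<le> c / (1 - \<gamma>)"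
proof -
  define M where "M = Max (range D)"
  have le_M: "D x \<le> M" for x by (simp add: M_def)
  have "D x \<le> c + \<gamma> * M" for x
  proof -
    have "pol_expect \<pi> x D \<le> M"
      using pol_expect_mono[OF p le_M] by (simp add: pol_expect_const[OF p])
    then show ?thesis using ineq[of x] bound[of x] mult_left_mono[OF _ gamma_nonneg] by fastforce
  qed
  moreover have "M \<in> range D" unfolding M_def by (rule Max_in) auto
  ultimately have "(1 - \<gamma>) * M \<le> c" by (auto simp: algebra_simps)
  then have "M \<le> c / (1 - \<gamma>)" using gamma_less_1 by (simp add: field_simps mult.commute)
  then show ?thesis using le_M[of s] by linarith
qed

lemma Vf_le_supersolution:
  assumes p: "is_policy \<pi>" and super: "\<And>s. pol_reward \<pi> s + \<gamma> * pol_expect \<pi> s W \<le> W s"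
  shows "Vf P r \<gamma> \<pi> s \<le> W s"
proof -
  have "Vf P r \<gamma> \<pi> s - W s \<le> 0 / (1 - \<gamma>)"
  proof (rule bound_from_bellman_ineq[OF p, where B = "\<lambda>_. 0"])
    show "Vf P r \<gamma> \<pi> x - W x \<le> 0 + \<gamma> * pol_expect \<pi> x (\<lambda>x. Vf P r \<gamma> \<pi> x - W x)" for x
      using super[of x] Vf_bellman[OF p, of x] by (simp add: pol_expect_diff algebra_simps)
  qed simp
  then show ?thesis by simp
qed

lemma Vf_ge_subsolution:
  assumes p: "is_policy \<pi>" and sub: "\<And>s. W s \<le> pol_reward \<pi> s + \<gamma> * pol_expect \<pi> s W"
  shows "W s \<le> Vf P r \<gamma> \<pi> s"
proof -
  have "W s - Vf P r \<gamma> \<pi> s \<le> 0 / (1 - \<gamma>)"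
  proof (rule bound_from_bellman_ineq[OF p, where B = "\<lambda>_. 0"])
    show "W x - Vf P r \<gamma> \<pi> x \<le> 0 + \<gamma> * pol_expect \<pi> x (\<lambda>x. W x - Vf P r \<gamma> \<pi> x)" for x
      using sub[of x] Vf_bellman[OF p, of x] by (simp add: pol_expect_diff algebra_simps)
  qed simp
  then show ?thesis by simp
qed

lemma policy_avg_Qf:
  "(\<Sum>a\<in>UNIV. \<pi> s a * Qf P r \<gamma> \<pi>' s a) = pol_reward \<pi> s + \<gamma> * pol_expect \<pi> s (Vf P r \<gamma> \<pi>')"
  unfolding Qf_def pol_reward_def pol_expect_def by (simp add: algebra_simps sum.distrib sum_distrib_left)

lemma Vf_eq_policy_avg_Qf:
  "is_policy \<pi> \<Longrightarrow> Vf P r \<gamma> \<pi> s = (\<Sum>a\<in>UNIV. \<pi> s a * Qf P r \<gamma> \<pi> s a)"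
  using Vf_bellman policy_avg_Qf by simp

lemma Uf_le:
  assumes p: "is_policy \<pi>" shows "Uf P r \<gamma> \<pi> s a \<le> 1 / (1 - \<gamma>)"
proof -
  have "(\<Sum>s'\<in>UNIV. P s a s' * Vf P r \<gamma> \<pi> s') \<le> (\<Sum>s'\<in>UNIV. P s a s' * (1 / (1 - \<gamma>)))"
    by (intro sum_mono mult_left_mono Vf_le[OF p] P_nonneg)
  also have "\<dots> = 1 / (1 - \<gamma>)" by (subst sum_distrib_right[symmetric]) (simp add: P_sum)
  finally have "Qf P r \<gamma> \<pi> s a \<le> 1 + \<gamma> * (1 / (1 - \<gamma>))"
    unfolding Qf_def using r_le_1[of s a] mult_left_mono[OF _ gamma_nonneg] by fastforce
  also have "\<dots> = 1 / (1 - \<gamma>)" using gamma_less_1 by (simp add: field_simps)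
  finally show ?thesis using Vf_nonneg[OF p, of s] by (simp add: Uf_def)
qed

definition avg_adv :: "('s \<Rightarrow> 'a \<Rightarrow> real) \<Rightarrow> ('s \<Rightarrow> 'a \<Rightarrow> real) \<Rightarrow> 's \<Rightarrow> real" where
  "avg_adv \<pi>' \<pi> s = (\<Sum>a\<in>UNIV. \<pi>' s a * Uf P r \<gamma> \<pi> s a)"

lemma avg_adv_eq:
  "is_policy \<pi>' \<Longrightarrow> avg_adv \<pi>' \<pi> s = pol_reward \<pi>' s + \<gamma> * pol_expect \<pi>' s (Vf P r \<gamma> \<pi>) - Vf P r \<gamma> \<pi> s"
  by (simp add: avg_adv_def Uf_def right_diff_distrib sum_subtractf policy_avg_const policy_avg_Qf)

lemma avg_adv_self: "is_policy \<pi> \<Longrightarrow> avg_adv \<pi> \<pi> s = 0"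
  by (simp add: avg_adv_eq Vf_bellman[symmetric])

lemma Vf_diff_eq:
  assumes "is_policy \<pi>'"
  shows "Vf P r \<gamma> \<pi>' s - Vf P r \<gamma> \<pi> s
    = avg_adv \<pi>' \<pi> s + \<gamma> * pol_expect \<pi>' s (\<lambda>x. Vf P r \<gamma> \<pi>' x - Vf P r \<gamma> \<pi> x)"
  using Vf_bellman[OF assms, of s] by (simp add: avg_adv_eq[OF assms] pol_expect_diff algebra_simps)

lemma summable_discounted_state_dist:
  "is_policy \<pi> \<Longrightarrow> is_dist \<mu> \<Longrightarrow> summable (\<lambda>t. \<gamma>^t * state_dist P \<pi> \<mu> t s)"
  by (intro summable_discounted_bounded state_dist_le_1 state_dist_nonneg) (auto simp: is_dist_def)

lemma visit_nonneg: "is_policy \<pi> \<Longrightarrow> is_dist \<mu> \<Longrightarrow> 0 \<le> visit P \<gamma> \<mu> \<pi> s"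
  unfolding visit_def using gamma_less_1 gamma_nonneg
  by (intro mult_nonneg_nonneg suminf_nonneg summable_discounted_state_dist state_dist_nonneg)
     (auto simp: is_dist_def)

lemma visit_ge_start:
  assumes "is_policy \<pi>" "is_dist \<mu>" shows "(1 - \<gamma>) * \<mu> s \<le> visit P \<gamma> \<mu> \<pi> s"
proof -
  have "(\<Sum>t\<in>{0}. \<gamma>^t * state_dist P \<pi> \<mu> t s) \<le> (\<Sum>t. \<gamma>^t * state_dist P \<pi> \<mu> t s)"
    using assms gamma_nonneg
    by (intro sum_le_suminf summable_discounted_state_dist mult_nonneg_nonneg state_dist_nonneg)
       (auto simp: is_dist_def)
  then show ?thesis unfolding visit_def using gamma_less_1 by (simp add: mult_left_mono)
qed

lemma visit_weighted_sum:
  assumes p: "is_policy \<pi>" and \<mu>: "is_dist \<mu>"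
  shows "(\<Sum>s\<in>UNIV. visit P \<gamma> \<mu> \<pi> s * f s)
    = (1 - \<gamma>) * (\<Sum>t. \<gamma>^t * (\<Sum>s\<in>UNIV. state_dist P \<pi> \<mu> t s * f s))"
proof -
  have sm: "summable (\<lambda>t. \<gamma>^t * state_dist P \<pi> \<mu> t s)" for s
    by (rule summable_discounted_state_dist[OF p \<mu>])
  have "(\<Sum>s\<in>UNIV. visit P \<gamma> \<mu> \<pi> s * f s)
      = (1 - \<gamma>) * (\<Sum>s\<in>UNIV. \<Sum>t. \<gamma>^t * state_dist P \<pi> \<mu> t s * f s)"
    by (simp add: visit_def sum_distrib_left suminf_mult2[OF sm] mult.assoc)
  also have "(\<Sum>s\<in>UNIV. \<Sum>t. \<gamma>^t * state_dist P \<pi> \<mu> t s * f s)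
      = (\<Sum>t. \<Sum>s\<in>UNIV. \<gamma>^t * state_dist P \<pi> \<mu> t s * f s)"
    by (intro suminf_sum[symmetric] summable_mult2 sm)
  finally show ?thesis by (simp add: sum_distrib_left mult.assoc)
qed

text \<open>Unrolling \<open>Vf_diff_eq\<close> along the trajectory of \<open>\<pi>'\<close>; the remainder vanishes geometrically.\<close>

lemma performance_difference:
  assumes p': "is_policy \<pi>'" and \<rho>: "is_dist \<rho>"
  shows "(\<Sum>s\<in>UNIV. visit P \<gamma> \<rho> \<pi>' s * avg_adv \<pi>' \<pi> s)
    = (1 - \<gamma>) * (\<Sum>s\<in>UNIV. \<rho> s * (Vf P r \<gamma> \<pi>' s - Vf P r \<gamma> \<pi> s))"
proof -
  let ?D = "\<lambda>x. Vf P r \<gamma> \<pi>' x - Vf P r \<gamma> \<pi> x"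
  let ?\<mu> = "state_dist P \<pi>' \<rho>"
  let ?a = "\<lambda>k. \<gamma>^k * (\<Sum>x\<in>UNIV. ?\<mu> k x * avg_adv \<pi>' \<pi> x)"
  let ?rem = "\<lambda>n. \<gamma>^n * (\<Sum>x\<in>UNIV. ?\<mu> n x * ?D x)"
  have telescope: "(\<Sum>x\<in>UNIV. \<rho> x * ?D x) = (\<Sum>k<n. ?a k) + ?rem n" for n
  proof (induction n)
    case (Suc n)
    have "(\<Sum>x\<in>UNIV. ?\<mu> n x * ?D x)
        = (\<Sum>x\<in>UNIV. ?\<mu> n x * avg_adv \<pi>' \<pi> x) + \<gamma> * (\<Sum>x\<in>UNIV. ?\<mu> n x * pol_expect \<pi>' x ?D)"
      by (subst Vf_diff_eq[OF p']) (simp add: algebra_simps sum.distrib sum_distrib_left)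
    also have "(\<Sum>x\<in>UNIV. ?\<mu> n x * pol_expect \<pi>' x ?D) = (\<Sum>x\<in>UNIV. ?\<mu> (Suc n) x * ?D x)"
      by (rule state_dist_Suc_expect[symmetric])
    finally show ?case using Suc by (simp add: algebra_simps)
  qed simp
  have "?rem \<longlonglongrightarrow> 0"
  proof (rule tendsto_0_le[where K = "\<Sum>x\<in>UNIV. \<bar>?D x\<bar>"])
    show "(\<lambda>n. \<gamma>^n) \<longlonglongrightarrow> 0" using gamma_nonneg gamma_less_1 by (intro LIMSEQ_power_zero) simp
    show "\<forall>\<^sub>F n in sequentially. norm (?rem n) \<le> norm (\<gamma>^n) * (\<Sum>x\<in>UNIV. \<bar>?D x\<bar>)"
      using gamma_nonneg abs_state_dist_weighted_sum_le[OF p' \<rho>, of _ ?D]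
      by (auto simp: abs_mult intro!: always_eventually mult_left_mono)
  qed
  moreover have "(\<Sum>k<n. ?a k) = (\<Sum>x\<in>UNIV. \<rho> x * ?D x) - ?rem n" for n
    using telescope[of n] by linarith
  ultimately have "(\<lambda>n. \<Sum>k<n. ?a k) \<longlonglongrightarrow> (\<Sum>x\<in>UNIV. \<rho> x * ?D x) - 0"
    by (simp only:) (intro tendsto_diff tendsto_const)
  then have "?a sums (\<Sum>x\<in>UNIV. \<rho> x * ?D x)" by (simp add: sums_def)
  then show ?thesis by (simp add: visit_weighted_sum[OF p' \<rho>] sums_iff)
qed

lemma Vf_improvement:
  assumes p': "is_policy \<pi>'" and adv: "\<And>x. 0 \<le> avg_adv \<pi>' \<pi> x"
  shows "avg_adv \<pi>' \<pi> s \<le> Vf P r \<gamma> \<pi>' s - Vf P r \<gamma> \<pi> s"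
proof -
  let ?v = "visit P \<gamma> (dirac s) \<pi>'"
  have "1 - \<gamma> \<le> ?v s"
    using visit_ge_start[OF p' is_dist_dirac[of s], of s] by (simp add: dirac_def)
  then have "(1 - \<gamma>) * avg_adv \<pi>' \<pi> s \<le> ?v s * avg_adv \<pi>' \<pi> s"
    using adv[of s] by (rule mult_right_mono)
  also have "\<dots> \<le> (\<Sum>x\<in>UNIV. ?v x * avg_adv \<pi>' \<pi> x)"
    using visit_nonneg[OF p' is_dist_dirac] adv by (intro member_le_sum) auto
  also have "\<dots> = (1 - \<gamma>) * (Vf P r \<gamma> \<pi>' s - Vf P r \<gamma> \<pi> s)"
    by (simp add: performance_difference[OF p' is_dist_dirac] sum_dirac)
  finally show ?thesis using gamma_less_1 by simp
qed

end

section \<open>MDPs with a unique optimal policy\<close>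

locale unique_optimum = finite_mdp P r \<gamma> for P :: "'s::finite \<Rightarrow> 'a::finite \<Rightarrow> 's \<Rightarrow> real" and r \<gamma> +
  fixes \<pi>opt :: "'s \<Rightarrow> 'a \<Rightarrow> real"
  assumes opt: "optimal_policy P r \<gamma> \<pi>opt"
    and opt_unique: "\<And>\<pi>. optimal_policy P r \<gamma> \<pi> \<Longrightarrow> \<pi> = \<pi>opt"
begin

abbreviation "Vopt \<equiv> Vf P r \<gamma> \<pi>opt"
abbreviation "Qopt \<equiv> Qf P r \<gamma> \<pi>opt"

lemma policy_opt: "is_policy \<pi>opt"
  using opt by (simp add: optimal_policy_def)

lemma Vf_le_Vopt: "is_policy \<pi> \<Longrightarrow> Vf P r \<gamma> \<pi> s \<le> Vopt s"
  using opt by (simp add: optimal_policy_def)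

lemma Qopt_le_Vopt: "Qopt s a \<le> Vopt s"
proof (rule ccontr)
  assume "\<not> Qopt s a \<le> Vopt s"
  then have U: "0 < Uf P r \<gamma> \<pi>opt s a" by (simp add: Uf_def)
  define \<pi>' where "\<pi>' = \<pi>opt(s := dirac a)"
  have p': "is_policy \<pi>'"
    using policy_opt is_dist_dirac[of a] by (simp add: \<pi>'_def is_policy_def)
  have adv: "avg_adv \<pi>' \<pi>opt x = (if x = s then Uf P r \<gamma> \<pi>opt s a else 0)" for x
  proof (cases "x = s")
    case True
    then show ?thesis using sum_dirac[of a "Uf P r \<gamma> \<pi>opt s"] by (simp add: \<pi>'_def avg_adv_def)
  next
    case False
    then show ?thesis using avg_adv_self[OF policy_opt, of x] by (simp add: \<pi>'_def avg_adv_def)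
  qed
  have "Uf P r \<gamma> \<pi>opt s a \<le> Vf P r \<gamma> \<pi>' s - Vopt s"
    using Vf_improvement[OF p', of \<pi>opt s] adv U by (simp add: less_imp_le)
  then show False using Vf_le_Vopt[OF p', of s] U by simp
qed

lemma exists_greedy_action: "\<exists>a. Qopt s a = Vopt s"
proof -
  obtain a where a: "\<forall>b. Qopt s b \<le> Qopt s a" using finite_ex_argmax by blast
  have "Vopt s = (\<Sum>b\<in>UNIV. \<pi>opt s b * Qopt s b)" by (rule Vf_eq_policy_avg_Qf[OF policy_opt])
  also have "\<dots> \<le> (\<Sum>b\<in>UNIV. \<pi>opt s b * Qopt s a)"
    using a by (intro sum_mono mult_left_mono policy_nonneg[OF policy_opt]) simp
  also have "\<dots> = Qopt s a" by (rule policy_avg_const[OF policy_opt])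
  finally show ?thesis using Qopt_le_Vopt[of s a] by (intro exI[of _ a]) simp
qed

definition greedy :: "'s \<Rightarrow> 'a" where
  "greedy s = (SOME a. Qopt s a = Vopt s)"

lemma Qopt_greedy: "Qopt s (greedy s) = Vopt s"
  unfolding greedy_def using exists_greedy_action by (rule someI_ex)

lemma deterministic_eq_opt:
  assumes f: "\<And>s. Qopt s (f s) = Vopt s" shows "deterministic f = \<pi>opt"
proof -
  have p: "is_policy (deterministic f)" by (rule policy_deterministic)
  have fixpoint: "pol_reward (deterministic f) x + \<gamma> * pol_expect (deterministic f) x Vopt = Vopt x" for x
    using policy_avg_Qf[of "deterministic f" x \<pi>opt] f[of x] by (simp add: deterministic_def sum_dirac)
  have "Vf P r \<gamma> (deterministic f) x = Vopt x" for x
    using Vf_le_supersolution[OF p, of Vopt x] Vf_ge_subsolution[OF p, of Vopt x] fixpoint by simp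
  then have "optimal_policy P r \<gamma> (deterministic f)"
    using p Vf_le_Vopt by (simp add: optimal_policy_def)
  then show ?thesis by (rule opt_unique)
qed

text \<open>Uniqueness of the optimal policy forces a strict action gap: a second greedy action at \<open>s\<close>
  would give a second deterministic optimal policy.\<close>

lemma Qopt_less_Vopt:
  assumes "b \<noteq> greedy s" shows "Qopt s b < Vopt s"
proof (rule ccontr)
  assume "\<not> Qopt s b < Vopt s"
  then have "Qopt s b = Vopt s" using Qopt_le_Vopt[of s b] by simp
  then have "deterministic (greedy(s := b)) = deterministic greedy"
    using Qopt_greedy deterministic_eq_opt by (metis fun_upd_apply)
  then have "dirac b = dirac (greedy s)" by (metis deterministic_def fun_upd_same)
  then show False using assms by (metis dirac_def zero_neq_one)
qed

end

section \<open>The discrete DG iteration\<close>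

locale dg_run = finite_mdp P r \<gamma> for P :: "'s::finite \<Rightarrow> 'a::finite \<Rightarrow> 's \<Rightarrow> real" and r \<gamma> +
  fixes \<eta> \<alpha> :: real and \<pi>0 :: "'s \<Rightarrow> 'a \<Rightarrow> real"
  assumes eta_pos: "0 < \<eta>" and alpha_pos: "0 < \<alpha>" and init: "full_support \<pi>0"
begin

definition pit :: "nat \<Rightarrow> 's \<Rightarrow> 'a \<Rightarrow> real" where
  "pit t = dg_iter P r \<gamma> \<eta> \<alpha> \<pi>0 t"

definition adv :: "nat \<Rightarrow> 's \<Rightarrow> 'a \<Rightarrow> real" where
  "adv t = Uf P r \<gamma> (pit t)"

definition gain :: "nat \<Rightarrow> 's \<Rightarrow> 'a \<Rightarrow> real" where
  "gain t s a = \<alpha> * wf P r \<gamma> \<eta> (pit t) s a * adv t s a"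

definition Z :: "nat \<Rightarrow> 's \<Rightarrow> real" where
  "Z t s = (\<Sum>a\<in>UNIV. pit t s a * exp (gain t s a))"

definition Vt :: "nat \<Rightarrow> 's \<Rightarrow> real" where
  "Vt t = Vf P r \<gamma> (pit t)"

abbreviation step_adv :: "nat \<Rightarrow> 's \<Rightarrow> real" where
  "step_adv t \<equiv> avg_adv (pit (Suc t)) (pit t)"

lemma pit_0: "pit 0 = \<pi>0"
  by (simp add: pit_def dg_iter_def)

lemma pit_Suc: "pit (Suc t) s a = pit t s a * exp (gain t s a) / Z t s"
  by (simp add: pit_def dg_iter_def dg_step_def gain_def Z_def adv_def)

lemma full_support_pit: "full_support (pit t)"
proof (induction t)
  case 0
  show ?case by (simp add: pit_0 init)
next
  case (Suc t)
  then have pos: "0 < pit t s a" for s a by (simp add: full_support_def)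
  then have Z: "0 < Z t s" for s unfolding Z_def by (intro sum_pos mult_pos_pos) auto
  have "(\<Sum>a\<in>UNIV. pit (Suc t) s a) = 1" for s
    using Z[of s] by (simp add: pit_Suc Z_def flip: sum_divide_distrib)
  moreover have "0 < pit (Suc t) s a" for s a using Z[of s] pos[of s a] by (simp add: pit_Suc)
  ultimately show ?case by (simp add: full_support_def is_policy_def is_dist_def less_imp_le)
qed

lemma policy_pit: "is_policy (pit t)"
  using full_support_pit by (simp add: full_support_def)

lemma pit_pos: "0 < pit t s a"
  using full_support_pit by (simp add: full_support_def)

lemma pit_le_1: "pit t s a \<le> 1"
  using member_le_sum[of a UNIV "pit t s"] pit_pos[THEN less_imp_le] policy_sum[OF policy_pit]
  by simp

lemma Z_pos: "0 < Z t s"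
  unfolding Z_def by (intro sum_pos mult_pos_pos pit_pos) auto

lemma gain_sign:
  "0 < gain t s a \<longleftrightarrow> 0 < adv t s a" "gain t s a < 0 \<longleftrightarrow> adv t s a < 0"
  "0 \<le> gain t s a \<longleftrightarrow> 0 \<le> adv t s a"
proof -
  define c where "c = \<alpha> * wf P r \<gamma> \<eta> (pit t) s a"
  have "0 < c" using alpha_pos by (simp add: c_def wf_def sigmoid_pos)
  moreover have "gain t s a = c * adv t s a" by (simp add: gain_def c_def)
  ultimately show "0 < gain t s a \<longleftrightarrow> 0 < adv t s a" "gain t s a < 0 \<longleftrightarrow> adv t s a < 0"
      "0 \<le> gain t s a \<longleftrightarrow> 0 \<le> adv t s a"
    by (simp_all add: zero_less_mult_iff mult_less_0_iff zero_le_mult_iff)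
qed

lemma gain_le: "gain t s a \<le> \<alpha> * max (adv t s a) 0"
proof (cases "0 \<le> adv t s a")
  case True
  have "wf P r \<gamma> \<eta> (pit t) s a \<le> 1" by (simp add: wf_def sigmoid_less_1 less_imp_le)
  then have "wf P r \<gamma> \<eta> (pit t) s a * adv t s a \<le> 1 * adv t s a"
    using True by (rule mult_right_mono)
  then show ?thesis using alpha_pos True by (simp add: gain_def mult.assoc)
next
  case False
  then have "gain t s a < 0" using gain_sign(2) by simp
  then show ?thesis using False by simp
qed

text \<open>The surprisal \<open>- ln (pit t s a)\<close> is nonnegative, so the weight \<open>wf\<close> of an action with
  nonnegative advantage is at least \<open>1/2\<close>.\<close>

lemma gain_ge_half:
  assumes "0 \<le> adv t s a" shows "\<alpha> * adv t s a / 2 \<le> gain t s a"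
proof -
  have "0 \<le> - ln (pit t s a)" using pit_pos pit_le_1 by simp
  then have "0 \<le> adv t s a * - ln (pit t s a) / \<eta>"
    using assms eta_pos by (intro divide_nonneg_pos mult_nonneg_nonneg)
  then have "1/2 \<le> wf P r \<gamma> \<eta> (pit t) s a"
    unfolding wf_def adv_def by (rule sigmoid_ge_half)
  then have "1/2 * adv t s a \<le> wf P r \<gamma> \<eta> (pit t) s a * adv t s a"
    using assms by (rule mult_right_mono)
  then show ?thesis using alpha_pos by (simp add: gain_def mult.assoc)
qed

lemma exp_gain_adv_nonneg: "0 \<le> (exp (gain t s a) - 1) * adv t s a"
proof (cases "0 \<le> adv t s a")
  case True
  then have "0 \<le> exp (gain t s a) - 1" using gain_sign(3) by simp
  then show ?thesis using True by simp
next
  case False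
  then have "gain t s a < 0" using gain_sign(2) by simp
  then have "exp (gain t s a) - 1 \<le> 0" by simp
  then show ?thesis using False by (simp add: mult_nonpos_nonpos)
qed

lemma exp_gain_adv_ge:
  assumes "0 \<le> adv t s a" shows "\<alpha> * (adv t s a)\<^sup>2 / 2 \<le> (exp (gain t s a) - 1) * adv t s a"
proof -
  have "\<alpha> * adv t s a / 2 \<le> exp (gain t s a) - 1"
    using gain_ge_half[OF assms] exp_ge_add_one_self[of "gain t s a"] by linarith
  from mult_right_mono[OF this assms] show ?thesis by (simp add: power2_eq_square)
qed

definition Z_max :: real where
  "Z_max = exp (\<alpha> / (1 - \<gamma>))"

lemma Z_le_Z_max: "Z t s \<le> Z_max"
proof -
  have "gain t s a \<le> \<alpha> / (1 - \<gamma>)" for a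
  proof -
    have "max (adv t s a) 0 \<le> 1 / (1 - \<gamma>)"
      using Uf_le[OF policy_pit] gamma_less_1 by (auto simp: adv_def)
    then have "\<alpha> * max (adv t s a) 0 \<le> \<alpha> * (1 / (1 - \<gamma>))"
      using alpha_pos by (intro mult_left_mono) auto
    then show ?thesis using gain_le[of t s a] by simp
  qed
  then have "Z t s \<le> (\<Sum>a\<in>UNIV. pit t s a * Z_max)" unfolding Z_def Z_max_def
    by (intro sum_mono mult_left_mono less_imp_le[OF pit_pos]) simp
  also have "\<dots> = Z_max" by (rule policy_avg_const[OF policy_pit])
  finally show ?thesis .
qed

text \<open>Since the advantages average to zero under \<open>pit t\<close>, only the excess \<open>exp (gain) - 1\<close> of the
  multiplicative update contributes to the expected advantage of the new policy.\<close>

lemma step_adv_eq: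
  "step_adv t s = (\<Sum>a\<in>UNIV. pit t s a * ((exp (gain t s a) - 1) * adv t s a)) / Z t s"
proof -
  have "step_adv t s = (\<Sum>a\<in>UNIV. pit t s a * exp (gain t s a) * adv t s a) / Z t s"
    by (simp add: avg_adv_def pit_Suc adv_def sum_divide_distrib)
  also have "(\<Sum>a\<in>UNIV. pit t s a * exp (gain t s a) * adv t s a)
      = (\<Sum>a\<in>UNIV. pit t s a * ((exp (gain t s a) - 1) * adv t s a) + pit t s a * adv t s a)"
    by (intro sum.cong) (simp_all add: algebra_simps)
  also have "\<dots> = (\<Sum>a\<in>UNIV. pit t s a * ((exp (gain t s a) - 1) * adv t s a))
      + avg_adv (pit t) (pit t) s"
    by (simp add: sum.distrib avg_adv_def adv_def)
  finally show ?thesis by (simp add: avg_adv_self[OF policy_pit])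
qed

lemma step_adv_ge: "pit t s a * ((exp (gain t s a) - 1) * adv t s a) / Z_max \<le> step_adv t s"
proof -
  let ?f = "\<lambda>b. pit t s b * ((exp (gain t s b) - 1) * adv t s b)"
  have nonneg: "0 \<le> ?f b" for b
    by (intro mult_nonneg_nonneg less_imp_le[OF pit_pos] exp_gain_adv_nonneg)
  have Z_max_pos: "0 < Z_max" by (simp add: Z_max_def)
  have "?f a / Z_max \<le> (\<Sum>b\<in>UNIV. ?f b) / Z_max"
    using Z_max_pos nonneg by (intro divide_right_mono member_le_sum) auto
  also have "\<dots> \<le> (\<Sum>b\<in>UNIV. ?f b) / Z t s"
    using nonneg Z_max_pos Z_pos[of t s]
    by (intro divide_left_mono sum_nonneg Z_le_Z_max mult_pos_pos) auto
  finally show ?thesis by (simp add: step_adv_eq)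
qed

lemma step_adv_nonneg: "0 \<le> step_adv t s"
  unfolding step_adv_eq
  by (intro divide_nonneg_pos sum_nonneg mult_nonneg_nonneg less_imp_le[OF pit_pos]
      exp_gain_adv_nonneg Z_pos)

lemma step_adv_le_Vt_diff: "step_adv t s \<le> Vt (Suc t) s - Vt t s"
  unfolding Vt_def by (intro Vf_improvement policy_pit step_adv_nonneg)

lemma adv_nonneg_if_others_neg:
  assumes neg: "\<And>b. b \<noteq> a \<Longrightarrow> adv t s b < 0"
  shows "0 \<le> adv t s a"
proof -
  have "0 = (\<Sum>b\<in>UNIV. pit t s b * adv t s b)"
    using avg_adv_self[OF policy_pit] by (simp add: avg_adv_def adv_def)
  also have "\<dots> = pit t s a * adv t s a + (\<Sum>b\<in>UNIV - {a}. pit t s b * adv t s b)"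
    by (rule sum.remove) auto
  also have "(\<Sum>b\<in>UNIV - {a}. pit t s b * adv t s b) \<le> 0"
    using neg pit_pos by (intro sum_nonpos mult_nonneg_nonpos) (auto intro: less_imp_le)
  finally show ?thesis using pit_pos[of t s a] by (simp add: zero_le_mult_iff)
qed

lemma pit_le_Suc_if_others_neg:
  assumes neg: "\<And>b. b \<noteq> a \<Longrightarrow> adv t s b < 0"
  shows "pit t s a \<le> pit (Suc t) s a"
proof -
  let ?g = "gain t s a"
  have "gain t s b \<le> ?g" for b
    using gain_sign[of t s b] gain_sign(3)[of t s a] adv_nonneg_if_others_neg[OF neg] neg[of b]
    by (cases "b = a") auto
  then have "Z t s \<le> (\<Sum>b\<in>UNIV. pit t s b * exp ?g)"
    unfolding Z_def by (intro sum_mono mult_left_mono less_imp_le[OF pit_pos]) simp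
  also have "\<dots> = exp ?g" by (rule policy_avg_const[OF policy_pit])
  finally have "pit t s a * exp ?g / exp ?g \<le> pit t s a * exp ?g / Z t s"
    using Z_pos[of t s] pit_pos[of t s a] by (intro divide_left_mono) auto
  then show ?thesis by (simp add: pit_Suc)
qed

lemma Vt_mono: "incseq (\<lambda>t. Vt t s)"
proof (rule incseq_SucI)
  show "Vt t s \<le> Vt (Suc t) s" for t
    using order_trans[OF step_adv_nonneg step_adv_le_Vt_diff, of t s] by simp
qed

end

section \<open>Convergence of the DG iteration to the optimal policy\<close>

locale dg_run_unique_opt = dg_run P r \<gamma> \<eta> \<alpha> \<pi>0 + unique_optimum P r \<gamma> \<pi>opt
  for P :: "'s::finite \<Rightarrow> 'a::finite \<Rightarrow> 's \<Rightarrow> real" and r \<gamma> \<eta> \<alpha> \<pi>0 \<pi>opt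
begin

lemma Vt_le_Vopt: "Vt t s \<le> Vopt s"
  unfolding Vt_def by (rule Vf_le_Vopt[OF policy_pit])

definition Vlim :: "'s \<Rightarrow> real" where
  "Vlim s = (SUP t. Vt t s)"

definition Ulim :: "'s \<Rightarrow> 'a \<Rightarrow> real" where
  "Ulim s a = r s a + \<gamma> * (\<Sum>s'\<in>UNIV. P s a s' * Vlim s') - Vlim s"

lemma Vt_tendsto: "(\<lambda>t. Vt t s) \<longlonglongrightarrow> Vlim s"
  unfolding Vlim_def
  by (rule LIMSEQ_incseq_SUP[OF _ Vt_mono]) (auto intro: bdd_aboveI2 Vt_le_Vopt)

lemma adv_eq: "adv t s a = r s a + \<gamma> * (\<Sum>s'\<in>UNIV. P s a s' * Vt t s') - Vt t s"
  by (simp add: adv_def Uf_def Qf_def Vt_def)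

lemma adv_tendsto: "(\<lambda>t. adv t s a) \<longlonglongrightarrow> Ulim s a"
  unfolding adv_eq Ulim_def by (intro tendsto_intros Vt_tendsto)

lemma step_adv_tendsto_0: "(\<lambda>t. step_adv t s) \<longlonglongrightarrow> 0"
proof (rule tendsto_sandwich[where f = "\<lambda>_. 0" and h = "\<lambda>t. Vt (Suc t) s - Vt t s"])
  have "(\<lambda>t. Vt (Suc t) s - Vt t s) \<longlonglongrightarrow> Vlim s - Vlim s"
    by (intro tendsto_diff LIMSEQ_Suc Vt_tendsto)
  then show "(\<lambda>t. Vt (Suc t) s - Vt t s) \<longlonglongrightarrow> 0" by simp
qed (use step_adv_nonneg step_adv_le_Vt_diff in auto)

text \<open>An action whose limiting advantage is positive keeps contributing a quadratic amount to
  \<open>step_adv\<close>, which tends to zero, so its probability must vanish.\<close>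

lemma pit_tendsto_0_if_Ulim_pos:
  assumes "0 < Ulim s a" shows "(\<lambda>t. pit t s a) \<longlonglongrightarrow> 0"
proof -
  define m where "m = Ulim s a / 2"
  define c where "c = \<alpha> * m\<^sup>2 / 2 / Z_max"
  have m: "0 < m" using assms by (simp add: m_def)
  have c: "0 < c" using m alpha_pos by (simp add: c_def Z_max_def)
  have "m < Ulim s a" using assms by (simp add: m_def)
  then have ev: "eventually (\<lambda>t. m < adv t s a) sequentially"
    by (rule order_tendstoD(1)[OF adv_tendsto])
  have bound: "pit t s a \<le> step_adv t s / c" if adv: "m < adv t s a" for t
  proof -
    have "m\<^sup>2 \<le> (adv t s a)\<^sup>2" using adv m by (intro power_mono) auto
    then have "\<alpha> * m\<^sup>2 / 2 \<le> \<alpha> * (adv t s a)\<^sup>2 / 2" using alpha_pos by simp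
    also have "\<dots> \<le> (exp (gain t s a) - 1) * adv t s a"
      using adv m by (intro exp_gain_adv_ge) simp
    finally have "c \<le> (exp (gain t s a) - 1) * adv t s a / Z_max"
      unfolding c_def by (rule divide_right_mono) (simp add: Z_max_def)
    then have "pit t s a * c \<le> pit t s a * ((exp (gain t s a) - 1) * adv t s a / Z_max)"
      using pit_pos[of t s a] by (intro mult_left_mono) auto
    also have "\<dots> \<le> step_adv t s" using step_adv_ge[of t s a] by simp
    finally show ?thesis using c by (simp add: pos_le_divide_eq)
  qed
  have "eventually (\<lambda>t. 0 \<le> pit t s a) sequentially"
    by (simp add: less_imp_le[OF pit_pos])
  moreover have "eventually (\<lambda>t. pit t s a \<le> step_adv t s / c) sequentially"
    using ev bound by (rule eventually_mono)
  moreover have "(\<lambda>t. step_adv t s / c) \<longlonglongrightarrow> 0"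
    using tendsto_divide[OF step_adv_tendsto_0 tendsto_const[of c]] c by simp
  ultimately show ?thesis by (rule tendsto_sandwich[OF _ _ tendsto_const])
qed

lemma pit_Suc_le_mult:
  assumes gain: "gain t s b \<le> gain t s a" and le: "pit t s b \<le> R * pit t s a"
  shows "pit (Suc t) s b \<le> R * pit (Suc t) s a"
proof -
  have "pit t s b * exp (gain t s b) \<le> R * pit t s a * exp (gain t s a)"
    using le gain order_trans[OF less_imp_le[OF pit_pos] le] by (intro mult_mono) auto
  then have "pit t s b * exp (gain t s b) / Z t s \<le> R * pit t s a * exp (gain t s a) / Z t s"
    using Z_pos[of t s] by (intro divide_right_mono) auto
  then show ?thesis by (simp add: pit_Suc)
qed

lemma pit_tendsto_0_if_gain_le:
  assumes a: "(\<lambda>t. pit t s a) \<longlonglongrightarrow> 0"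
    and le: "eventually (\<lambda>t. gain t s b \<le> gain t s a) sequentially"
  shows "(\<lambda>t. pit t s b) \<longlonglongrightarrow> 0"
proof -
  obtain T where T: "\<And>t. t \<ge> T \<Longrightarrow> gain t s b \<le> gain t s a"
    using le unfolding eventually_sequentially by blast
  define R where "R = pit T s b / pit T s a"
  have "pit t s b \<le> R * pit t s a" if "t \<ge> T" for t
    using that
  proof (induction t rule: dec_induct)
    case base
    show ?case using pit_pos[of T s a] by (simp add: R_def)
  next
    case (step t)
    then show ?case using pit_Suc_le_mult[OF T] by simp
  qed
  then have le: "eventually (\<lambda>t. pit t s b \<le> R * pit t s a) sequentially"
    unfolding eventually_sequentially by blast
  have lim: "(\<lambda>t. R * pit t s a) \<longlonglongrightarrow> 0"
    using tendsto_mult[OF tendsto_const[of R] a] by simp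
  show ?thesis
    by (rule tendsto_sandwich[OF _ le tendsto_const lim]) (simp add: less_imp_le[OF pit_pos])
qed

lemma eventually_gain_le:
  assumes b: "Ulim s b \<le> 0" and a: "0 < Ulim s a"
  shows "eventually (\<lambda>t. gain t s b \<le> gain t s a) sequentially"
proof -
  define m where "m = Ulim s a"
  have "eventually (\<lambda>t. m/2 < adv t s a) sequentially"
    using order_tendstoD(1)[OF adv_tendsto, of "m/2" s a] a by (simp add: m_def)
  moreover have "eventually (\<lambda>t. adv t s b < m/4) sequentially"
    using order_tendstoD(2)[OF adv_tendsto, of s b "m/4"] a b by (simp add: m_def)
  ultimately show ?thesis
  proof eventually_elim
    case (elim t)
    have "gain t s b \<le> \<alpha> * max (adv t s b) 0" by (rule gain_le)
    also have "\<dots> \<le> \<alpha> * (m/4)" using elim a alpha_pos by (intro mult_left_mono) (auto simp: m_def)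
    also have "\<dots> \<le> \<alpha> * adv t s a / 2" using elim alpha_pos by simp
    also have "\<dots> \<le> gain t s a" using elim a by (intro gain_ge_half) (simp add: m_def)
    finally show ?case .
  qed
qed

lemma Ulim_nonpos: "Ulim s a \<le> 0"
proof (rule ccontr)
  assume "\<not> Ulim s a \<le> 0"
  then have pos: "0 < Ulim s a" by simp
  have "(\<lambda>t. pit t s b) \<longlonglongrightarrow> 0" for b
  proof (cases "0 < Ulim s b")
    case True
    then show ?thesis by (rule pit_tendsto_0_if_Ulim_pos)
  next
    case False
    then show ?thesis
      by (intro pit_tendsto_0_if_gain_le[OF pit_tendsto_0_if_Ulim_pos[OF pos]] eventually_gain_le pos)
         simp
  qed
  then have "(\<lambda>t. \<Sum>b\<in>UNIV. pit t s b) \<longlonglongrightarrow> (\<Sum>b\<in>UNIV. 0::real)"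
    using tendsto_sum[of UNIV "\<lambda>b t. pit t s b" "\<lambda>_. 0"] by simp
  then show False using policy_sum[OF policy_pit] LIMSEQ_const_iff[of "1::real" 0] by simp
qed

lemma Vlim_eq_Vopt: "Vlim s = Vopt s"
proof (rule antisym)
  show "Vlim s \<le> Vopt s" by (rule LIMSEQ_le_const2[OF Vt_tendsto]) (auto intro: Vt_le_Vopt)
  show "Vopt s \<le> Vlim s"
  proof (rule Vf_le_supersolution[OF policy_opt])
    fix x
    have "pol_reward \<pi>opt x + \<gamma> * pol_expect \<pi>opt x Vlim = (\<Sum>a\<in>UNIV. \<pi>opt x a * (Ulim x a + Vlim x))"
      unfolding Ulim_def pol_reward_def pol_expect_def by (simp add: algebra_simps sum.distrib sum_distrib_left)
    also have "\<dots> \<le> (\<Sum>a\<in>UNIV. \<pi>opt x a * Vlim x)"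
      using Ulim_nonpos by (intro sum_mono mult_left_mono policy_nonneg[OF policy_opt]) (auto simp: add_le_same_cancel2)
    also have "\<dots> = Vlim x" by (rule policy_avg_const[OF policy_opt])
    finally show "pol_reward \<pi>opt x + \<gamma> * pol_expect \<pi>opt x Vlim \<le> Vlim x" .
  qed
qed

lemma Ulim_eq: "Ulim s a = Qopt s a - Vopt s"
  by (simp add: Ulim_def Qf_def Vlim_eq_Vopt)

end

section \<open>The \<open>O(1/t)\<close> rate\<close>

context dg_run_unique_opt
begin

lemma eventually_nongreedy_adv_neg:
  "eventually (\<lambda>t. \<forall>s b. b \<noteq> greedy s \<longrightarrow> adv t s b < 0) sequentially"
proof -
  have "eventually (\<lambda>t. b \<noteq> greedy s \<longrightarrow> adv t s b < 0) sequentially" for s b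
  proof (cases "b = greedy s")
    case False
    then have "Ulim s b < 0" using Qopt_less_Vopt by (simp add: Ulim_eq)
    then have "eventually (\<lambda>t. adv t s b < 0) sequentially" by (rule order_tendstoD(2)[OF adv_tendsto])
    then show ?thesis by (rule eventually_mono) simp
  qed simp
  then show ?thesis by (simp add: eventually_all_finite)
qed

lemma eventually_greedy_prob_bounded_below:
  obtains p T where "0 < p"
    and "\<And>t s b. t \<ge> T \<Longrightarrow> b \<noteq> greedy s \<Longrightarrow> adv t s b < 0"
    and "\<And>t s. t \<ge> T \<Longrightarrow> p \<le> pit t s (greedy s)"
proof -
  obtain T where neg: "\<And>t s b. t \<ge> T \<Longrightarrow> b \<noteq> greedy s \<Longrightarrow> adv t s b < 0"
    using eventually_nongreedy_adv_neg unfolding eventually_sequentially by blast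
  define p where "p = Min (range (\<lambda>s. pit T s (greedy s)))"
  have p_pos: "0 < p" unfolding p_def using pit_pos by (subst Min_gr_iff) auto
  have p_le: "p \<le> pit t s (greedy s)" if "T \<le> t" for t s
    using that
  proof (induction t rule: dec_induct)
    case base
    show ?case by (simp add: p_def)
  next
    case (step t)
    then show ?case using pit_le_Suc_if_others_neg[OF neg] by (meson order_trans)
  qed
  show ?thesis using p_pos neg p_le by (rule that)
qed

end

locale dg_rate = dg_run_unique_opt P r \<gamma> \<eta> \<alpha> \<pi>0 \<pi>opt
  for P :: "'s::finite \<Rightarrow> 'a::finite \<Rightarrow> 's \<Rightarrow> real" and r \<gamma> \<eta> \<alpha> \<pi>0 \<pi>opt +
  fixes \<rho> :: "'s \<Rightarrow> real" and dmin :: real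
  assumes rho: "is_dist \<rho>" and dmin_pos: "0 < dmin"
    and visit_ge_dmin: "\<And>\<pi> s. full_support \<pi> \<Longrightarrow> dmin \<le> visit P \<gamma> \<rho> \<pi> s"
begin

definition subopt :: "nat \<Rightarrow> real" where
  "subopt t = Vrho P r \<gamma> \<rho> \<pi>opt - Vrho P r \<gamma> \<rho> (pit t)"

lemma subopt_eq: "subopt t = (\<Sum>s\<in>UNIV. \<rho> s * (Vopt s - Vt t s))"
  by (simp add: subopt_def Vrho_def Vt_def algebra_simps sum_subtractf)

lemma subopt_nonneg: "0 \<le> subopt t"
  unfolding subopt_eq using Vt_le_Vopt rho
  by (intro sum_nonneg mult_nonneg_nonneg) (auto simp: is_dist_def)

text \<open>Comparing with the greedy deterministic policy, whose value is \<open>Vopt\<close>, bounds the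
  suboptimality by the largest greedy advantage.\<close>

lemma subopt_le:
  assumes adv_le: "\<And>s. adv t s (greedy s) \<le> c" shows "subopt t \<le> c / (1 - \<gamma>)"
proof -
  let ?D = "\<lambda>s. Vopt s - Vt t s"
  have D: "?D s \<le> c / (1 - \<gamma>)" for s
  proof (rule bound_from_bellman_ineq[OF policy_deterministic, where B = "\<lambda>s. adv t s (greedy s)"])
    show "?D x \<le> adv t x (greedy x) + \<gamma> * pol_expect (deterministic greedy) x ?D" for x
      using Qopt_greedy[of x]
      by (simp add: pol_expect_deterministic adv_eq Qf_def algebra_simps sum_subtractf)
  qed (rule adv_le)
  have "subopt t \<le> (\<Sum>s\<in>UNIV. \<rho> s * (c / (1 - \<gamma>)))"
    unfolding subopt_eq using D rho by (intro sum_mono mult_left_mono) (auto simp: is_dist_def)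
  also have "\<dots> = (\<Sum>s\<in>UNIV. \<rho> s) * (c / (1 - \<gamma>))" by (rule sum_distrib_right[symmetric])
  also have "\<dots> = c / (1 - \<gamma>)" using rho by (simp add: is_dist_def)
  finally show ?thesis .
qed

lemma subopt_decrease: "dmin * step_adv t s \<le> (1 - \<gamma>) * (subopt t - subopt (Suc t))"
proof -
  let ?v = "visit P \<gamma> \<rho> (pit (Suc t))"
  have "dmin * step_adv t s \<le> ?v s * step_adv t s"
    using visit_ge_dmin[OF full_support_pit] step_adv_nonneg by (rule mult_right_mono)
  also have "\<dots> \<le> (\<Sum>x\<in>UNIV. ?v x * step_adv t x)"
    using visit_nonneg[OF policy_pit rho] step_adv_nonneg by (intro member_le_sum) auto
  also have "\<dots> = (1 - \<gamma>) * (subopt t - subopt (Suc t))"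
    by (simp add: performance_difference[OF policy_pit rho] subopt_eq Vt_def
        algebra_simps sum_subtractf)
  finally show ?thesis .
qed

text \<open>The decrease is driven by the largest greedy advantage \<open>u \<ge> (1 - \<gamma>) subopt t\<close>.\<close>

lemma subopt_quadratic_decrease:
  assumes p: "0 < p"
    and neg: "\<And>s b. b \<noteq> greedy s \<Longrightarrow> adv t s b < 0" and pit_ge: "\<And>s. p \<le> pit t s (greedy s)"
  shows "subopt (Suc t) \<le> subopt t - dmin * p * \<alpha> * (1 - \<gamma>) / (2 * Z_max) * (subopt t)\<^sup>2"
proof -
  obtain s where s: "\<forall>x. adv t x (greedy x) \<le> adv t s (greedy s)"
    using finite_ex_argmax[of "\<lambda>x. adv t x (greedy x)"] by auto
  let ?u = "adv t s (greedy s)"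
  have u: "0 \<le> ?u" using adv_nonneg_if_others_neg[OF neg] .
  have "subopt t \<le> ?u / (1 - \<gamma>)" using s by (intro subopt_le) simp
  then have "(1 - \<gamma>) * subopt t \<le> ?u" using gamma_less_1 by (simp add: field_simps)
  then have sq: "((1 - \<gamma>) * subopt t)\<^sup>2 \<le> ?u\<^sup>2"
    using subopt_nonneg gamma_less_1 by (intro power_mono) auto
  have Z_max: "0 < Z_max" by (simp add: Z_max_def)
  have "p * (\<alpha> * ?u\<^sup>2 / 2) \<le> pit t s (greedy s) * ((exp (gain t s (greedy s)) - 1) * ?u)"
    using pit_ge[of s] exp_gain_adv_ge[OF u]
    by (rule mult_mono) (use pit_pos[of t s "greedy s"] alpha_pos in auto)
  then have "p * (\<alpha> * ?u\<^sup>2 / 2) / Z_max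
      \<le> pit t s (greedy s) * ((exp (gain t s (greedy s)) - 1) * ?u) / Z_max"
    using Z_max by (intro divide_right_mono) simp_all
  also have "\<dots> \<le> step_adv t s" by (rule step_adv_ge)
  finally have "dmin * (p * (\<alpha> * ?u\<^sup>2 / 2) / Z_max) \<le> dmin * step_adv t s"
    using dmin_pos by (rule mult_left_mono[OF _ less_imp_le])
  also have "\<dots> \<le> (1 - \<gamma>) * (subopt t - subopt (Suc t))" by (rule subopt_decrease)
  finally have decr: "dmin * (p * (\<alpha> * ?u\<^sup>2 / 2) / Z_max) \<le> (1 - \<gamma>) * (subopt t - subopt (Suc t))" .
  have "dmin * (p * (\<alpha> * ((1 - \<gamma>) * subopt t)\<^sup>2 / 2) / Z_max)
      \<le> dmin * (p * (\<alpha> * ?u\<^sup>2 / 2) / Z_max)"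
    using sq dmin_pos p alpha_pos Z_max by (simp add: divide_right_mono)
  with decr have "(1 - \<gamma>) * (dmin * p * \<alpha> * (1 - \<gamma>) / (2 * Z_max) * (subopt t)\<^sup>2)
      \<le> (1 - \<gamma>) * (subopt t - subopt (Suc t))"
    by (simp add: power2_eq_square algebra_simps)
  then have "dmin * p * \<alpha> * (1 - \<gamma>) / (2 * Z_max) * (subopt t)\<^sup>2 \<le> subopt t - subopt (Suc t)"
    by (rule mult_left_le_imp_le) (use gamma_less_1 in simp)
  then show ?thesis by linarith
qed

lemma subopt_bigo: "subopt \<in> O(\<lambda>t. 1 / real t)"
proof -
  obtain p T where p: "0 < p"
    and neg: "\<And>t s b. t \<ge> T \<Longrightarrow> b \<noteq> greedy s \<Longrightarrow> adv t s b < 0"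
    and pit_ge: "\<And>t s. t \<ge> T \<Longrightarrow> p \<le> pit t s (greedy s)"
    by (rule eventually_greedy_prob_bounded_below) (rule that)
  show ?thesis
  proof (rule quadratic_decrease_bigo)
    show "0 < dmin * p * \<alpha> * (1 - \<gamma>) / (2 * Z_max)"
      using dmin_pos p alpha_pos gamma_less_1 by (simp add: Z_max_def)
    show "0 \<le> subopt t" for t by (rule subopt_nonneg)
    show "subopt (Suc t) \<le> subopt t - dmin * p * \<alpha> * (1 - \<gamma>) / (2 * Z_max) * (subopt t)\<^sup>2"
      if "T \<le> t" for t
      using that by (intro subopt_quadratic_decrease[OF p]) (simp_all add: neg pit_ge)
  qed
qed

end

theorem corollary4:
  fixes P :: "'s::finite \<Rightarrow> 'a::finite \<Rightarrow> 's \<Rightarrow> real"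
    and r :: "'s \<Rightarrow> 'a \<Rightarrow> real" and \<gamma> :: real and \<rho> :: "'s \<Rightarrow> real"
    and \<pi>s \<pi>0 :: "'s \<Rightarrow> 'a \<Rightarrow> real" and dmin \<eta> :: real
  assumes mdp: "is_mdp P r \<gamma> \<rho>"
    and opt: "optimal_policy P r \<gamma> \<pi>s"
    and uniq: "\<And>\<pi>. optimal_policy P r \<gamma> \<pi> \<Longrightarrow> \<pi> = \<pi>s"
    and dmin_pos: "dmin > 0"
    and dmin: "\<And>\<pi> s. full_support \<pi> \<Longrightarrow> visit P \<gamma> \<rho> \<pi> s \<ge> dmin"
    and eta: "\<eta> > 0"
    and init: "full_support \<pi>0"
  shows "\<exists>\<alpha>0>0. \<forall>\<alpha>. 0 < \<alpha> \<and> \<alpha> \<le> \<alpha>0 \<longrightarrow>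
           (\<lambda>t. Vrho P r \<gamma> \<rho> \<pi>s - Vrho P r \<gamma> \<rho> (dg_iter P r \<gamma> \<eta> \<alpha> \<pi>0 t))
              \<in> O(\<lambda>t. 1 / real t)"
proof (intro exI[of _ 1] conjI allI impI)
  \<comment> \<open>The rate holds for every step size \<open>\<alpha> > 0\<close>, so the bound \<open>\<alpha>0 = 1\<close> is arbitrary.\<close>
  fix \<alpha> :: real
  assume "0 < \<alpha> \<and> \<alpha> \<le> 1"
  then have \<alpha>: "0 < \<alpha>" by simp
  interpret finite_mdp P r \<gamma> by (rule finite_mdp_if_is_mdp[OF mdp])
  interpret dg_rate P r \<gamma> \<eta> \<alpha> \<pi>0 \<pi>s \<rho> dmin
  proof unfold_locales
    show "is_dist \<rho>" using mdp by (simp add: is_mdp_def)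
  qed (use opt uniq dmin_pos dmin eta \<alpha> init in blast)+
  show "(\<lambda>t. Vrho P r \<gamma> \<rho> \<pi>s - Vrho P r \<gamma> \<rho> (dg_iter P r \<gamma> \<eta> \<alpha> \<pi>0 t)) \<in> O(\<lambda>t. 1 / real t)"
    using subopt_bigo unfolding subopt_def pit_def .
qed simp

end
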